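(* Let $\mathbb{F}\in\{\mathbb{R},\mathbb{C}\}$, and let $S\in\mathsf{GL}_m(\mathbb{F})$ and $T\in\mathsf{GL}_n(\mathbb{F})$ be Perron similarities with $m>1$ and $n>1$. Then $\mathcal{C}(S)\otimes\mathcal{C}(T)$ is a proper subset of $\mathcal{C}(S\otimes T)$.
   Context: For $x\in\mathbb{F}^n$, $D_x$ is the diagonal matrix with $(i,i)$-entry $x_i$; $M\ge0$ means every entry of $M$ is a nonnegative real number. $\mathcal{C}(S)=\{x\in\mathbb{F}^n\mid SD_xS^{-1}\ge 0\}$ for $S\in\mathsf{GL}_n(\mathbb{F})$. An invertible $S$ is a Perron similarity if for some $i$ the column $Se_i$ and the row $e_i^\top S^{-1}$ are both entrywise nonnegative or both entrywise nonpositive (real). $\otimes$ is the Kronecker product; for sets $X,Y$ of vectors, $X\otimes Y=\{x\otimes y\mid x\in X,\ y\in Y\}$. *)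

theory Defs
  imports "HOL-Analysis.Analysis"
begin

definition nonneg :: "'a::real_algebra_1 \<Rightarrow> bool" where
  "nonneg z \<longleftrightarrow> (\<exists>r::real. r \<ge> 0 \<and> z = of_real r)"

definition nonpos :: "'a::real_algebra_1 \<Rightarrow> bool" where
  "nonpos z \<longleftrightarrow> (\<exists>r::real. r \<le> 0 \<and> z = of_real r)"

definition mat_nonneg :: "'a::real_algebra_1 ^'k^'k \<Rightarrow> bool" where
  "mat_nonneg M \<longleftrightarrow> (\<forall>i j. nonneg (M $ i $ j))"

definition diag_mat :: "'a::field ^'k \<Rightarrow> 'a^'k^'k" where
  "diag_mat x = (\<chi> i j. if i = j then x $ i else 0)"

definition cone :: "'a::{field,real_algebra_1} ^'k^'k \<Rightarrow> ('a^'k) set" where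
  "cone S = {x. mat_nonneg (S ** diag_mat x ** matrix_inv S)}"

definition perron_similarity :: "'a::{field,real_algebra_1} ^'k^'k \<Rightarrow> bool" where
  "perron_similarity S \<longleftrightarrow> invertible S \<and>
     (\<exists>i. ((\<forall>k. nonneg (S $ k $ i)) \<and> (\<forall>k. nonneg (matrix_inv S $ i $ k)))
        \<or> ((\<forall>k. nonpos (S $ k $ i)) \<and> (\<forall>k. nonpos (matrix_inv S $ i $ k))))"

definition kron :: "'a::times ^'m^'m \<Rightarrow> 'a^'n^'n \<Rightarrow> 'a^('m \<times> 'n)^('m \<times> 'n)" where
  "kron A B = (\<chi> p q. A $ fst p $ fst q * B $ snd p $ snd q)"

definition kronv :: "'a::times ^'m \<Rightarrow> 'a^'n \<Rightarrow> 'a^('m \<times> 'n)" where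
  "kronv x y = (\<chi> p. x $ fst p * y $ snd p)"

definition kron_set :: "('a::times ^'m) set \<Rightarrow> ('a^'n) set \<Rightarrow> ('a^('m \<times> 'n)) set" where
  "kron_set X Y = {kronv x y | x y. x \<in> X \<and> y \<in> Y}"

end

theory Submission
  imports Defs
begin

(* Since D_(x\<otimes>y) = D_x \<otimes> D_y and (S\<otimes>T)\<inverse> = S\<inverse> \<otimes> T\<inverse>, the mixed-product rule gives
   (S\<otimes>T) D_(x\<otimes>y) (S\<otimes>T)\<inverse> = (S D_x S\<inverse>) \<otimes> (T D_y T\<inverse>), a Kronecker product of nonnegative
   matrices; this is the inclusion. For properness, S\<otimes>T is again a Perron similarity, and
   whenever S e_p and e_p\<^sup>T S\<inverse> have a common sign, 1 + e_p lies in C(S), because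
   S D_(1 + e_p) S\<inverse> = I + (S e_p)(e_p\<^sup>T S\<inverse>). But if both factors have dimension > 1, then
   z = 1 + e_(i,j) is no Kronecker product x\<otimes>y: with a \<noteq> i and b \<noteq> j such a product would
   satisfy z_(i,b) z_(a,j) = z_(i,j) z_(a,b), i.e. 1 = 2. *)

lemma matrix_inv_right:
  fixes A :: "'a::semiring_1^'n^'n"
  assumes "invertible A"
  shows "A ** matrix_inv A = mat 1"
  using assms unfolding invertible_def matrix_inv_def by (rule someI2_ex) blast

lemma matrix_inv_left:
  fixes A :: "'a::semiring_1^'n^'n"
  assumes "invertible A"
  shows "matrix_inv A ** A = mat 1"
  using assms unfolding invertible_def matrix_inv_def by (rule someI2_ex) blast

lemma matrix_inv_unique:
  fixes A :: "'a::semiring_1^'n^'n"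
  assumes "A ** B = mat 1" "B ** A = mat 1"
  shows "matrix_inv A = B"
proof -
  have "invertible A" using assms unfolding invertible_def by blast
  have "matrix_inv A = matrix_inv A ** (A ** B)" using assms by simp
  also have "\<dots> = B"
    using matrix_inv_left[OF \<open>invertible A\<close>] by (simp add: matrix_mul_assoc)
  finally show ?thesis .
qed

lemma matrix_add_rdistrib: "(B + C) ** A = B ** A + C ** A"
  by (vector matrix_matrix_mult_def sum.distrib[symmetric] field_simps)

lemma kron_mult:
  fixes A C :: "'a::comm_semiring_1^'m^'m" and B D :: "'a^'n^'n"
  shows "kron A B ** kron C D = kron (A ** C) (B ** D)"
proof -
  have "(\<Sum>k\<in>UNIV. A $ fst p $ fst k * B $ snd p $ snd k * (C $ fst k $ fst q * D $ snd k $ snd q))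
      = (\<Sum>k\<in>UNIV. A $ fst p $ k * C $ k $ fst q) * (\<Sum>l\<in>UNIV. B $ snd p $ l * D $ l $ snd q)"
    for p q :: "'m \<times> 'n"
    by (simp add: sum_product sum.cartesian_product case_prod_beta ac_simps)
  then show ?thesis
    by (simp add: kron_def matrix_matrix_mult_def vec_eq_iff)
qed

lemma kron_mat_1: "kron (mat 1 :: 'a::semiring_1^'m^'m) (mat 1 :: 'a^'n^'n) = mat 1"
  by (auto simp: kron_def mat_def vec_eq_iff prod_eq_iff)

lemma kron_matrix_inv_inverse:
  fixes S :: "'a::comm_semiring_1^'m^'m" and T :: "'a^'n^'n"
  assumes "invertible S" "invertible T"
  shows "kron S T ** kron (matrix_inv S) (matrix_inv T) = mat 1"
    and "kron (matrix_inv S) (matrix_inv T) ** kron S T = mat 1"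
  by (simp_all add: kron_mult kron_mat_1 matrix_inv_left matrix_inv_right assms)

lemma invertible_kron:
  fixes S :: "'a::comm_semiring_1^'m^'m" and T :: "'a^'n^'n"
  assumes "invertible S" "invertible T"
  shows "invertible (kron S T)"
  using kron_matrix_inv_inverse[OF assms] unfolding invertible_def by blast

lemma matrix_inv_kron:
  fixes S :: "'a::comm_semiring_1^'m^'m" and T :: "'a^'n^'n"
  assumes "invertible S" "invertible T"
  shows "matrix_inv (kron S T) = kron (matrix_inv S) (matrix_inv T)"
  using kron_matrix_inv_inverse[OF assms] by (rule matrix_inv_unique)

lemma diag_mat_kronv: "diag_mat (kronv x y) = kron (diag_mat x) (diag_mat y)"
  by (auto simp: diag_mat_def kron_def kronv_def vec_eq_iff prod_eq_iff)

lemma diag_mat_add: "diag_mat (x + y) = diag_mat x + diag_mat (y :: 'a::field^'k)"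
  by (auto simp: diag_mat_def vec_eq_iff)

lemma diag_mat_1: "diag_mat (1 :: 'a::field^'k) = mat 1"
  by (simp add: diag_mat_def mat_def vec_eq_iff)

lemma matrix_mult_diag_mat_axis:
  fixes A B :: "'a::field^'k^'k"
  shows "(A ** diag_mat (axis p 1) ** B) $ r $ s = A $ r $ p * B $ p $ s"
proof -
  have column: "(A ** diag_mat (axis p 1)) $ r $ k = (if k = p then A $ r $ p else 0)" for k
    by (simp add: matrix_matrix_mult_def diag_mat_def axis_def if_distrib cong: if_cong)
  have "(A ** diag_mat (axis p 1) ** B) $ r $ s
      = (\<Sum>k\<in>UNIV. (A ** diag_mat (axis p 1)) $ r $ k * B $ k $ s)"
    by (simp only: matrix_matrix_mult_def vec_lambda_beta)
  also have "\<dots> = A $ r $ p * B $ p $ s"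
    by (simp add: column if_distrib [of "\<lambda>c. c * _"] cong: if_cong)
  finally show ?thesis .
qed

lemma nonneg_mult: "nonneg (a::'a::real_algebra_1) \<Longrightarrow> nonneg b \<Longrightarrow> nonneg (a * b)"
  unfolding nonneg_def by (metis of_real_mult zero_le_mult_iff)

lemma nonneg_mult_nonpos_nonpos: "nonpos (a::'a::real_algebra_1) \<Longrightarrow> nonpos b \<Longrightarrow> nonneg (a * b)"
  unfolding nonneg_def nonpos_def by (metis of_real_mult zero_le_mult_iff)

lemma nonpos_mult_nonneg_nonpos: "nonneg (a::'a::real_algebra_1) \<Longrightarrow> nonpos b \<Longrightarrow> nonpos (a * b)"
  unfolding nonneg_def nonpos_def by (metis of_real_mult mult_nonneg_nonpos)

lemma nonpos_mult_nonpos_nonneg: "nonpos (a::'a::real_algebra_1) \<Longrightarrow> nonneg b \<Longrightarrow> nonpos (a * b)"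
  unfolding nonneg_def nonpos_def by (metis of_real_mult mult_nonpos_nonneg)

lemma nonneg_add: "nonneg (a::'a::real_algebra_1) \<Longrightarrow> nonneg b \<Longrightarrow> nonneg (a + b)"
  unfolding nonneg_def by (metis of_real_add add_nonneg_nonneg)

lemma nonneg_of_bool: "nonneg (of_bool P :: 'a::real_algebra_1)"
  unfolding nonneg_def by (cases P) (auto intro: exI[of _ 0] exI[of _ 1])

lemma perron_similarity_kron:
  fixes S :: "'a::real_field^'m^'m" and T :: "'a^'n^'n"
  assumes S: "perron_similarity S" and T: "perron_similarity T"
  shows "perron_similarity (kron S T)"
proof -
  obtain i where i: "(\<forall>k. nonneg (S $ k $ i)) \<and> (\<forall>k. nonneg (matrix_inv S $ i $ k))
      \<or> (\<forall>k. nonpos (S $ k $ i)) \<and> (\<forall>k. nonpos (matrix_inv S $ i $ k))"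
    using S unfolding perron_similarity_def by blast
  obtain j where j: "(\<forall>l. nonneg (T $ l $ j)) \<and> (\<forall>l. nonneg (matrix_inv T $ j $ l))
      \<or> (\<forall>l. nonpos (T $ l $ j)) \<and> (\<forall>l. nonpos (matrix_inv T $ j $ l))"
    using T unfolding perron_similarity_def by blast
  have inv: "invertible S" "invertible T"
    using S T unfolding perron_similarity_def by blast+
  show ?thesis
    unfolding perron_similarity_def matrix_inv_kron[OF inv]
  proof (intro conjI invertible_kron[OF inv] exI[of _ "(i, j)"])
    show "(\<forall>p. nonneg (kron S T $ p $ (i, j))) \<and> (\<forall>p. nonneg (kron (matrix_inv S) (matrix_inv T) $ (i, j) $ p))
      \<or> (\<forall>p. nonpos (kron S T $ p $ (i, j))) \<and> (\<forall>p. nonpos (kron (matrix_inv S) (matrix_inv T) $ (i, j) $ p))"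
      using i j by (elim disjE conjE)
        (simp_all add: kron_def nonneg_mult nonneg_mult_nonpos_nonpos
          nonpos_mult_nonneg_nonpos nonpos_mult_nonpos_nonneg)
  qed
qed

lemma one_plus_axis_in_cone:
  fixes S :: "'a::real_field^'k^'k"
  assumes "invertible S" and rank_one_nonneg: "\<And>r s. nonneg (S $ r $ p * matrix_inv S $ p $ s)"
  shows "1 + axis p 1 \<in> cone S"
proof -
  have "S ** diag_mat (1 + axis p 1) ** matrix_inv S = mat 1 + S ** diag_mat (axis p 1) ** matrix_inv S"
    by (simp only: diag_mat_add diag_mat_1 matrix_add_ldistrib matrix_add_rdistrib
        matrix_mul_rid matrix_inv_right[OF \<open>invertible S\<close>])
  then have "(S ** diag_mat (1 + axis p 1) ** matrix_inv S) $ r $ s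
      = of_bool (r = s) + S $ r $ p * matrix_inv S $ p $ s" for r s
    by (simp add: matrix_mult_diag_mat_axis mat_def)
  then show ?thesis
    by (simp add: cone_def mat_nonneg_def nonneg_add nonneg_of_bool rank_one_nonneg)
qed

lemma perron_similarity_one_plus_axis_in_cone:
  fixes S :: "'a::real_field^'k^'k"
  assumes "perron_similarity S"
  obtains p where "1 + axis p 1 \<in> cone S"
proof -
  obtain p where "invertible S" and "\<And>r s. nonneg (S $ r $ p * matrix_inv S $ p $ s)"
    using assms unfolding perron_similarity_def by (metis nonneg_mult nonneg_mult_nonpos_nonpos)
  then show ?thesis by (intro that one_plus_axis_in_cone)
qed

lemma exists_other_if_card_gt_1:
  assumes "CARD('a) > 1"
  obtains a :: 'a where "a \<noteq> i"
  using assms by (metis UNIV_I is_singleton_altdef is_singleton_iff_ex1 less_irrefl)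

lemma one_plus_axis_neq_kronv:
  assumes "CARD('m) > 1" "CARD('n) > 1"
  shows "(1 + axis (i, j) 1 :: 'a::field^('m::finite \<times> 'n::finite)) \<noteq> kronv x y"
proof
  assume z: "1 + axis (i, j) 1 = kronv x y"
  obtain a :: 'm where "a \<noteq> i" by (rule exists_other_if_card_gt_1[OF assms(1)])
  obtain b :: 'n where "b \<noteq> j" by (rule exists_other_if_card_gt_1[OF assms(2)])
  let ?z = "\<lambda>q. (1 + axis (i, j) 1 :: 'a^('m \<times> 'n)) $ q"
  have "?z (i, b) * ?z (a, j) = ?z (i, j) * ?z (a, b)"
    unfolding z by (simp add: kronv_def ac_simps)
  then show False
    using \<open>a \<noteq> i\<close> \<open>b \<noteq> j\<close>
    by (simp add: axis_def) (metis add_cancel_left_right one_add_one zero_neq_one)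
qed

lemma kron_set_cone_subset:
  fixes S :: "'a::real_field^'m^'m" and T :: "'a^'n^'n"
  assumes "invertible S" "invertible T"
  shows "kron_set (cone S) (cone T) \<subseteq> cone (kron S T)"
proof
  fix z assume "z \<in> kron_set (cone S) (cone T)"
  then obtain x y where z: "z = kronv x y" and x: "x \<in> cone S" and y: "y \<in> cone T"
    unfolding kron_set_def by blast
  have "kron S T ** diag_mat z ** matrix_inv (kron S T)
      = kron (S ** diag_mat x ** matrix_inv S) (T ** diag_mat y ** matrix_inv T)"
    by (simp add: z diag_mat_kronv matrix_inv_kron[OF assms] kron_mult)
  then show "z \<in> cone (kron S T)" using x y
    by (simp add: cone_def mat_nonneg_def kron_def nonneg_mult)
qed

lemma kron_set_cone_psubset:
  fixes S :: "'a::real_field^'m^'m" and T :: "'a^'n^'n"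
  assumes "perron_similarity S" "perron_similarity T" "CARD('m) > 1" "CARD('n) > 1"
  shows "kron_set (cone S) (cone T) \<subset> cone (kron S T)"
proof -
  have "invertible S" "invertible T"
    using assms(1,2) unfolding perron_similarity_def by blast+
  moreover obtain p where "1 + axis p 1 \<in> cone (kron S T)"
    using perron_similarity_one_plus_axis_in_cone perron_similarity_kron assms(1,2) by blast
  moreover have "1 + axis p 1 \<notin> kron_set (cone S) (cone T)"
    using one_plus_axis_neq_kronv[OF assms(3,4)] unfolding kron_set_def by (cases p) blast
  ultimately show ?thesis
    using kron_set_cone_subset by blast
qed

theorem theorem4p6:
  shows "(\<forall>(S::real^'m^'m) (T::real^'n^'n).
            invertible S \<and> invertible T \<and> perron_similarity S \<and> perron_similarity T
            \<and> CARD('m) > 1 \<and> CARD('n) > 1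
            \<longrightarrow> kron_set (cone S) (cone T) \<subset> cone (kron S T))
       \<and> (\<forall>(S::complex^'m^'m) (T::complex^'n^'n).
            invertible S \<and> invertible T \<and> perron_similarity S \<and> perron_similarity T
            \<and> CARD('m) > 1 \<and> CARD('n) > 1
            \<longrightarrow> kron_set (cone S) (cone T) \<subset> cone (kron S T))"
  by (simp add: kron_set_cone_psubset)

end
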